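(* Let $(i^*_k,j^*_k)$ and $\mu_k$, $k=1,\dots,n$, be a sequence of $k$-th order bottleneck edges and robustness margins, and let $\Pi^*$ be a sequential bottleneck optimising assignment for this sequence. Assume $\mu_k>0$ for all $k\in\{1,\dots,n\}$. Then $\Pi^*\in\mathcal P_{\mathcal A,\mathcal T}(\mathcal A\times\mathcal T)$, $w_{i^*_1,j^*_1}\ge w_{i^*_2,j^*_2}\ge\dots\ge w_{i^*_n,j^*_n}$, and $\Pi^*$ is the unique lexicographic optimiser in the following sense: for every $\Pi'\in\mathcal P_{\mathcal A,\mathcal T}(\mathcal A\times\mathcal T)$ with $\Pi'\ne\Pi^*$, letting $(w'_1,\dots,w'_n)$ be the weights $w_{i,j}$ of the $n$ pairs $(i,j)$ with $\pi'_{i,j}=1$ listed in non-increasing order, either $w_{i^*_1,j^*_1}<w'_1$, or there is $l\in\{2,\dots,n\}$ with $w_{i^*_k,j^*_k}=w'_k$ for all $k<l$ and $w_{i^*_l,j^*_l}<w'_l$. In particular, the sequence $(w_{i^*_1,j^*_1},\dots,w_{i^*_n,j^*_n})$ and the assignment $\Pi^*$ do not depend on the choices of the $k$-th order bottleneck edges.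
   Context: Let $\mathcal A$ be a finite set of agents with $|\mathcal A|=m>1$ and $\mathcal T$ a finite set of tasks with $m\ge|\mathcal T|=n\ge 1$. Let $\mathcal W=\{w_{i,j}\ge 0:(i,j)\in\mathcal A\times\mathcal T\}$ be given assignment weights. An assignment is a family $\Pi=\{\pi_{i,j}\in\{0,1\}:(i,j)\in\mathcal A\times\mathcal T\}$. For $\bar{\mathcal A}\subseteq\mathcal A$, $\bar{\mathcal T}\subseteq\mathcal T$ and $\hat{\mathcal E}\subseteq\bar{\mathcal A}\times\bar{\mathcal T}$, $\mathcal P_{\bar{\mathcal A},\bar{\mathcal T}}(\hat{\mathcal E})$ is the set of assignments $\Pi$ with $\sum_{i:(i,j)\in\hat{\mathcal E}}\pi_{i,j}=1$ for every $j\in\bar{\mathcal T}$ and $\sum_{j:(i,j)\in\hat{\mathcal E}}\pi_{i,j}\le 1$ for every $i\in\bar{\mathcal A}$. Define $b(\Pi,\hat{\mathcal E},\mathcal W)=\max_{(i,j)\in\hat{\mathcal E}}\pi_{i,j}w_{i,j}$; $B_{\bar{\mathcal A},\bar{\mathcal T}}(\hat{\mathcal E},\mathcal W)=\min_{\Pi\in\mathcal P_{\bar{\mathcal A},\bar{\mathcal T}}(\hat{\mathcal E})}b(\Pi,\hat{\mathcal E},\mathcal W)$ (with $\min\emptyset=+\infty$); $\mathcal B_{\bar{\mathcal A},\bar{\mathcal T}}(\hat{\mathcal E},\mathcal W)$ the corresponding set of minimisers (bottleneck minimising assignments); and $E_{\bar{\mathcal A},\bar{\mathcal T}}(\hat{\mathcal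 E},\mathcal W)=\{(i,j)\in\hat{\mathcal E}: w_{i,j}=B_{\bar{\mathcal A},\bar{\mathcal T}}(\hat{\mathcal E},\mathcal W)\}$. For $\bar{\mathcal E}=\bar{\mathcal A}\times\bar{\mathcal T}$ with $|\bar{\mathcal E}|>1$: $e_{\bar{\mathcal A},\bar{\mathcal T}}(\mathcal W)=\arg\max_{(i,j)\in E_{\bar{\mathcal A},\bar{\mathcal T}}(\bar{\mathcal E},\mathcal W)}B_{\bar{\mathcal A},\bar{\mathcal T}}(\bar{\mathcal E}\setminus\{(i,j)\},\mathcal W)$ (maximum-margin bottleneck edges) and $r_{\bar{\mathcal A},\bar{\mathcal T}}(\mathcal W)=\max_{(i,j)\in E_{\bar{\mathcal A},\bar{\mathcal T}}(\bar{\mathcal E},\mathcal W)}\big(B_{\bar{\mathcal A},\bar{\mathcal T}}(\bar{\mathcal E}\setminus\{(i,j)\},\mathcal W)-w_{i,j}\big)$ (robustness margin); if $|\bar{\mathcal E}|=1$, $e_{\bar{\mathcal A},\bar{\mathcal T}}(\mathcal W)=\bar{\mathcal E}$ and $r_{\bar{\mathcal A},\bar{\mathcal T}}(\mathcal W)=\infty$. Sequential bottleneck assignment: set $\bar{\mathcal A}_1=\mathcal A$, $\bar{\mathcal T}_1=\mathcal T$, and for $k=1,\dots,n$ let $\bar{\mathcal E}_k=\bar{\mathcal A}_k\times\bar{\mathcal T}_k$, choose a $k$-th order bottleneck edge $(i^*_k,j^*_k)\in e_{\bar{\mathcal A}_k,\bar{\mathcal T}_k}(\mathcal W)$ (any choice),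 let $\mu_k=r_{\bar{\mathcal A}_k,\bar{\mathcal T}_k}(\mathcal W)$ be the $k$-th order robustness margin, and set $\bar{\mathcal A}_{k+1}=\bar{\mathcal A}_k\setminus\{i^*_k\}$, $\bar{\mathcal T}_{k+1}=\bar{\mathcal T}_k\setminus\{j^*_k\}$. Given these choices, an assignment $\Pi^*$ is sequential bottleneck optimising if $\Pi^*\in\mathcal B_{\bar{\mathcal A}_k,\bar{\mathcal T}_k}(\bar{\mathcal E}_k,\mathcal W)$ for every $k\in\{1,\dots,n\}$. *)

theory Defs
  imports Complex_Main "HOL-Library.Multiset" "HOL-Library.Extended_Real"
begin

text \<open>Agents are the elements of a finite type 'a (the set A = UNIV), tasks the elements
of a finite type 't (the set T = UNIV). Extended reals are used so that min over the empty set is +infinity.\<close>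

definition is_assignment :: "('a \<Rightarrow> 't \<Rightarrow> nat) \<Rightarrow> bool" where
  "is_assignment Pi \<longleftrightarrow> (\<forall>i j. Pi i j \<in> {0, 1})"

definition feas :: "'a::finite set \<Rightarrow> 't::finite set \<Rightarrow> ('a \<times> 't) set
    \<Rightarrow> ('a \<Rightarrow> 't \<Rightarrow> nat) set" where
  "feas Ab Tb E = {Pi. is_assignment Pi
      \<and> (\<forall>j\<in>Tb. (\<Sum>i\<in>{i. (i, j) \<in> E}. Pi i j) = 1)
      \<and> (\<forall>i\<in>Ab. (\<Sum>j\<in>{j. (i, j) \<in> E}. Pi i j) \<le> 1)}"

definition bval :: "('a \<Rightarrow> 't \<Rightarrow> nat) \<Rightarrow> ('a \<times> 't) set \<Rightarrow> ('a \<Rightarrow> 't \<Rightarrow> real) \<Rightarrow> ereal" where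
  "bval Pi E w = (SUP e\<in>E. ereal (real (Pi (fst e) (snd e)) * w (fst e) (snd e)))"

definition Bmin :: "'a::finite set \<Rightarrow> 't::finite set \<Rightarrow> ('a \<times> 't) set
    \<Rightarrow> ('a \<Rightarrow> 't \<Rightarrow> real) \<Rightarrow> ereal" where
  "Bmin Ab Tb E w = (INF Pi\<in>feas Ab Tb E. bval Pi E w)"

definition Bset :: "'a::finite set \<Rightarrow> 't::finite set \<Rightarrow> ('a \<times> 't) set
    \<Rightarrow> ('a \<Rightarrow> 't \<Rightarrow> real) \<Rightarrow> ('a \<Rightarrow> 't \<Rightarrow> nat) set" where
  "Bset Ab Tb E w = {Pi\<in>feas Ab Tb E. bval Pi E w = Bmin Ab Tb E w}"

definition Eset :: "'a::finite set \<Rightarrow> 't::finite set \<Rightarrow> ('a \<times> 't) set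
    \<Rightarrow> ('a \<Rightarrow> 't \<Rightarrow> real) \<Rightarrow> ('a \<times> 't) set" where
  "Eset Ab Tb E w = {e\<in>E. ereal (w (fst e) (snd e)) = Bmin Ab Tb E w}"

definition medges :: "'a::finite set \<Rightarrow> 't::finite set \<Rightarrow> ('a \<Rightarrow> 't \<Rightarrow> real) \<Rightarrow> ('a \<times> 't) set" where
  "medges Ab Tb w =
    (if card (Ab \<times> Tb) = 1 then Ab \<times> Tb
     else {e\<in>Eset Ab Tb (Ab \<times> Tb) w. \<forall>e'\<in>Eset Ab Tb (Ab \<times> Tb) w.
             Bmin Ab Tb (Ab \<times> Tb - {e'}) w \<le> Bmin Ab Tb (Ab \<times> Tb - {e}) w})"

definition rmargin :: "'a::finite set \<Rightarrow> 't::finite set \<Rightarrow> ('a \<Rightarrow> 't \<Rightarrow> real) \<Rightarrow> ereal" where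
  "rmargin Ab Tb w =
    (if card (Ab \<times> Tb) = 1 then \<infinity>
     else (SUP e\<in>Eset Ab Tb (Ab \<times> Tb) w.
             Bmin Ab Tb (Ab \<times> Tb - {e}) w - ereal (w (fst e) (snd e))))"

definition Abar :: "(nat \<Rightarrow> 'a) \<Rightarrow> nat \<Rightarrow> 'a set" where
  "Abar I k = UNIV - I ` {1..<k}"

definition Tbar :: "(nat \<Rightarrow> 't) \<Rightarrow> nat \<Rightarrow> 't set" where
  "Tbar J k = UNIV - J ` {1..<k}"

definition bottleneck_seq :: "('a::finite \<Rightarrow> 't::finite \<Rightarrow> real) \<Rightarrow> (nat \<Rightarrow> 'a) \<Rightarrow> (nat \<Rightarrow> 't) \<Rightarrow> bool" where
  "bottleneck_seq w I J \<longleftrightarrow>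
     (\<forall>k\<in>{1..card (UNIV :: 't set)}. (I k, J k) \<in> medges (Abar I k) (Tbar J k) w)"

definition mu :: "('a::finite \<Rightarrow> 't::finite \<Rightarrow> real) \<Rightarrow> (nat \<Rightarrow> 'a) \<Rightarrow> (nat \<Rightarrow> 't) \<Rightarrow> nat \<Rightarrow> ereal" where
  "mu w I J k = rmargin (Abar I k) (Tbar J k) w"

definition seq_opt :: "('a::finite \<Rightarrow> 't::finite \<Rightarrow> real) \<Rightarrow> (nat \<Rightarrow> 'a) \<Rightarrow> (nat \<Rightarrow> 't)
    \<Rightarrow> ('a \<Rightarrow> 't \<Rightarrow> nat) \<Rightarrow> bool" where
  "seq_opt w I J Pi \<longleftrightarrow>
     (\<forall>k\<in>{1..card (UNIV :: 't set)}. Pi \<in> Bset (Abar I k) (Tbar J k) (Abar I k \<times> Tbar J k) w)"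

definition sorted_weights :: "('a::finite \<Rightarrow> 't::finite \<Rightarrow> real) \<Rightarrow> ('a \<Rightarrow> 't \<Rightarrow> nat) \<Rightarrow> real list" where
  "sorted_weights w Pi =
     rev (sorted_list_of_multiset
            (image_mset (\<lambda>e. w (fst e) (snd e)) (mset_set {e. Pi (fst e) (snd e) = 1})))"

end

theory Submission
  imports Defs "HOL-Library.Cardinality"
begin

text \<open>A positive margin at stage k means that removing the k-th bottleneck edge e_k strictly
raises the bottleneck of the stage-k subproblem. Hence an assignment that uses e_1, ..., e_(k-1)
but not e_k must use, inside the stage-k subproblem, an edge strictly heavier than e_k. By
induction this forces the sequential optimiser to use every e_k, so its sorted weight vector is
w(e_1) \<ge> ... \<ge> w(e_n); and every other assignment, at the first e_k it misses, has a sorted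
weight vector that is lexicographically larger. Lexicographic comparison in both directions then
gives independence of the choices.\<close>

lemma sorted_desc_nth_if_submultiset:
  fixes ws ys :: "'a::linorder list"
  assumes sorted: "sorted (rev ws)" and sub: "mset ys \<subseteq># mset ws"
    and ys_Q: "\<forall>y\<in>set ys. Q y" and Q_up: "\<And>x y. Q x \<Longrightarrow> x \<le> y \<Longrightarrow> Q y"
    and i: "i < length ys"
  shows "Q (ws ! i)"
proof (rule ccontr)
  assume not_Q: "\<not> Q (ws ! i)"
  have "\<not> Q x" if "x \<in> set (drop i ws)" for x
  proof -
    from that obtain p where "p < length (drop i ws)" "x = drop i ws ! p"
      by (auto simp: in_set_conv_nth)
    then have "x \<le> ws ! i" using sorted_rev_nth_mono[OF sorted] by simp
    then show ?thesis using not_Q Q_up by blast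
  qed
  then have "filter Q ws = filter Q (take i ws)"
    by (metis append_take_drop_id append_Nil2 filter_append filter_False)
  then have "length (filter Q ws) \<le> i"
    by (metis length_filter_le length_take min.bounded_iff)
  moreover have "filter_mset Q (mset ys) = mset ys"
    using ys_Q by (metis filter_True mset_filter)
  then have "mset ys \<subseteq># mset (filter Q ws)"
    using multiset_filter_mono[OF sub, of Q] by simp
  then have "length ys \<le> length (filter Q ws)"
    by (metis size_mset size_mset_mono)
  ultimately show False using i by simp
qed

lemma sorted_desc_nth_ge_if_submultiset:
  fixes ws :: "'a::linorder list" and a :: "nat \<Rightarrow> 'a"
  assumes sorted: "sorted (rev ws)"
    and antimono: "\<And>i j. 1 \<le> i \<Longrightarrow> i \<le> j \<Longrightarrow> j \<le> k \<Longrightarrow> a j \<le> a i"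
    and sub: "mset (map a [1..<k] @ [d]) \<subseteq># mset ws"
    and d: "a k \<le> d" and i: "1 \<le> i" "i \<le> k"
  shows "a i \<le> ws ! (i - 1)"
proof -
  define xs where "xs = map a [1..<k] @ [d]"
  have "mset (take i xs) \<subseteq># mset ws"
    using sub unfolding xs_def[symmetric]
    by (metis append_take_drop_id mset_append mset_subset_eq_add_left subset_mset.order_trans)
  moreover have "\<forall>x\<in>set (take i xs). a i \<le> x"
  proof (cases "i < k")
    case True
    then have "take i xs = map a [1..<Suc i]"
      unfolding xs_def using i by (simp add: take_map)
    then show ?thesis using antimono i True by auto
  next
    case False
    then have "take i xs = xs" using i by (simp add: xs_def)
    then show ?thesis unfolding xs_def using antimono i False d by fastforce
  qed
  ultimately show ?thesis
    by (rule sorted_desc_nth_if_submultiset[OF sorted, where Q = "(\<le>) (a i)"])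
      (use i in \<open>auto simp: xs_def\<close>)
qed

text \<open>The conclusion says that a_1, ..., a_k is lexicographically smaller than ws
(with the 0-based indexing of ws).\<close>

lemma lex_less_if_submultiset:
  fixes ws :: "'a::linorder list" and a :: "nat \<Rightarrow> 'a"
  assumes sorted: "sorted (rev ws)" and k: "1 \<le> k"
    and antimono: "\<And>i j. 1 \<le> i \<Longrightarrow> i \<le> j \<Longrightarrow> j \<le> k \<Longrightarrow> a j \<le> a i"
    and sub: "mset (map a [1..<k] @ [d]) \<subseteq># mset ws"
    and d: "a k < d"
  shows "\<exists>l\<in>{1..k}. (\<forall>j\<in>{1..<l}. a j = ws ! (j - 1)) \<and> a l < ws ! (l - 1)"
proof -
  define i0 where "i0 = (LEAST i. 1 \<le> i \<and> i \<le> k \<and> a i = a k)"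
  have i0: "1 \<le> i0 \<and> i0 \<le> k \<and> a i0 = a k"
    unfolding i0_def by (rule LeastI[of _ k]) (use k in auto)
  have "a k < a j" if "1 \<le> j" "j < i0" for j
    using not_less_Least[of j "\<lambda>i. 1 \<le> i \<and> i \<le> k \<and> a i = a k"] antimono[of j k] that i0
    unfolding i0_def by fastforce
  moreover have "take (i0 - 1) (map a [1..<k]) = map a [1..<i0]"
    using i0 by (simp add: take_map)
  ultimately have above: "\<forall>x\<in>set (take (i0 - 1) (map a [1..<k]) @ [d]). a k < x"
    using d by auto
  have "mset (take (i0 - 1) (map a [1..<k]) @ [d]) \<subseteq># mset ws"
    by (rule subset_mset.order_trans[OF _ sub])
      (metis append_take_drop_id mset_append mset_subset_eq_add_left subset_mset.add_right_mono)
  then have "a k < ws ! (i0 - 1)"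
    by (rule sorted_desc_nth_if_submultiset[OF sorted _ above]) (use i0 in auto)
  define l where "l = (LEAST l. 1 \<le> l \<and> l \<le> k \<and> a l < ws ! (l - 1))"
  have l: "1 \<le> l \<and> l \<le> k \<and> a l < ws ! (l - 1)"
    unfolding l_def by (rule LeastI[of _ i0]) (use i0 \<open>a k < ws ! (i0 - 1)\<close> in auto)
  have "a j = ws ! (j - 1)" if "j \<in> {1..<l}" for j
    using not_less_Least[of j "\<lambda>l. 1 \<le> l \<and> l \<le> k \<and> a l < ws ! (l - 1)"] that l
      sorted_desc_nth_ge_if_submultiset[OF sorted antimono sub less_imp_le[OF d], of j]
    unfolding l_def by force
  then show ?thesis using l by (intro bexI[of _ l]) auto
qed

lemma feas_entry_01: "P \<in> feas A T E \<Longrightarrow> P i j = 0 \<or> P i j = 1"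
  unfolding feas_def is_assignment_def by auto

lemma sum_ge_two_values:
  fixes f :: "'b::finite \<Rightarrow> nat"
  assumes "x \<noteq> y"
  shows "f x + f y \<le> sum f UNIV"
  using sum_mono2[of UNIV "{x, y}" f] assms by simp

lemma feas_UNIV_row_unique:
  assumes "P \<in> feas UNIV UNIV UNIV" "P i j = 1" "P i j' = 1"
  shows "j = j'"
proof -
  have "(\<Sum>j\<in>UNIV. P i j) \<le> 1" using assms(1) unfolding feas_def by auto
  then show ?thesis using assms(2,3) sum_ge_two_values[of j j' "P i"] by (cases "j = j'") auto
qed

lemma feas_UNIV_col_unique:
  assumes "P \<in> feas UNIV UNIV UNIV" "P i j = 1" "P i' j = 1"
  shows "i = i'"
proof -
  have "(\<Sum>i\<in>UNIV. P i j) = 1" using assms(1) unfolding feas_def by auto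
  then show ?thesis using assms(2,3) sum_ge_two_values[of i i' "\<lambda>i. P i j"] by (cases "i = i'") auto
qed

lemma feas_restrict:
  assumes P: "P \<in> feas UNIV UNIV UNIV"
    and edges: "\<And>i j. j \<in> T \<Longrightarrow> P i j = 1 \<Longrightarrow> (i, j) \<in> E"
  shows "P \<in> feas A T E"
proof -
  have "(\<Sum>i\<in>{i. (i, j) \<in> E}. P i j) = (\<Sum>i\<in>UNIV. P i j)" if "j \<in> T" for j
  proof (rule sum.mono_neutral_left)
    show "\<forall>i\<in>UNIV - {i. (i, j) \<in> E}. P i j = 0"
      using edges[OF that] feas_entry_01[OF P] by blast
  qed auto
  moreover have "(\<Sum>j\<in>{j. (i, j) \<in> E}. P i j) \<le> 1" for i
  proof -
    have "(\<Sum>j\<in>{j. (i, j) \<in> E}. P i j) \<le> (\<Sum>j\<in>UNIV. P i j)"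
      by (rule sum_mono2) auto
    also have "\<dots> \<le> 1"
      using P unfolding feas_def by auto
    finally show ?thesis .
  qed
  ultimately show ?thesis
    using P unfolding feas_def by auto
qed

lemma feas_no_edges: "T \<noteq> {} \<Longrightarrow> feas A T {} = {}"
  unfolding feas_def by auto

lemma Bmin_le_bval: "P \<in> feas A T E \<Longrightarrow> Bmin A T E w \<le> bval P E w"
  unfolding Bmin_def by (rule INF_lower)

lemma weight_le_bval:
  assumes "e \<in> E" "P (fst e) (snd e) = 1"
  shows "ereal (w (fst e) (snd e)) \<le> bval P E w"
proof -
  have "ereal (real (P (fst e) (snd e)) * w (fst e) (snd e)) \<le> bval P E w"
    unfolding bval_def using assms(1) by (rule SUP_upper)
  then show ?thesis using assms(2) by simp
qed

lemma heavier_used_edge_if_less_bval: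
  assumes P: "P \<in> feas A T E" and "0 \<le> c" and "ereal c < bval P E w"
  shows "\<exists>e\<in>E. P (fst e) (snd e) = 1 \<and> c < w (fst e) (snd e)"
proof -
  obtain e where e: "e \<in> E" "ereal c < ereal (real (P (fst e) (snd e)) * w (fst e) (snd e))"
    using assms(3) unfolding bval_def by (auto simp: less_SUP_iff)
  then show ?thesis using feas_entry_01[OF P, of "fst e" "snd e"] \<open>0 \<le> c\<close> by auto
qed

lemma medges_subset: "medges A T w \<subseteq> A \<times> T"
  unfolding medges_def Eset_def by auto

lemma medges_weight:
  "e \<in> medges A T w \<Longrightarrow> card (A \<times> T) \<noteq> 1 \<Longrightarrow> ereal (w (fst e) (snd e)) = Bmin A T (A \<times> T) w"
  unfolding medges_def Eset_def by auto

lemma Bmin_remove_medge_gt: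
  assumes e: "e \<in> medges A T w" and card: "card (A \<times> T) \<noteq> 1" and margin: "0 < rmargin A T w"
  shows "ereal (w (fst e) (snd e)) < Bmin A T (A \<times> T - {e}) w"
proof -
  have e_Eset: "e \<in> Eset A T (A \<times> T) w"
    and e_max: "\<forall>e'\<in>Eset A T (A \<times> T) w. Bmin A T (A \<times> T - {e'}) w \<le> Bmin A T (A \<times> T - {e}) w"
    using e unfolding medges_def if_not_P[OF card] by simp_all
  have "0 < (SUP e'\<in>Eset A T (A \<times> T) w. Bmin A T (A \<times> T - {e'}) w - ereal (w (fst e') (snd e')))"
    using margin unfolding rmargin_def if_not_P[OF card] .
  also have "\<dots> \<le> Bmin A T (A \<times> T - {e}) w - ereal (w (fst e) (snd e))"
  proof (rule SUP_least)
    fix e' assume e': "e' \<in> Eset A T (A \<times> T) w"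
    then have "ereal (w (fst e') (snd e')) = ereal (w (fst e) (snd e))"
      using e_Eset unfolding Eset_def by simp
    then have "w (fst e') (snd e') = w (fst e) (snd e)"
      by simp
    then show "Bmin A T (A \<times> T - {e'}) w - ereal (w (fst e') (snd e'))
        \<le> Bmin A T (A \<times> T - {e}) w - ereal (w (fst e) (snd e))"
      using e_max e' by (simp add: ereal_minus_mono)
  qed
  finally show ?thesis
    by (cases "Bmin A T (A \<times> T - {e}) w") auto
qed

lemma sorted_rev_sorted_weights: "sorted (rev (sorted_weights w P))"
  by (simp add: sorted_weights_def)

lemma mset_used_weights_subset_sorted_weights:
  assumes "distinct es" "\<forall>e\<in>set es. P (fst e) (snd e) = 1"
  shows "mset (map (\<lambda>e. w (fst e) (snd e)) es) \<subseteq># mset (sorted_weights w P)"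
proof -
  have "mset_set (set es) \<subseteq># mset_set {e. P (fst e) (snd e) = 1}"
    using assms(2) by (intro subset_imp_msubset_mset_set) auto
  then have "image_mset (\<lambda>e. w (fst e) (snd e)) (mset es)
      \<subseteq># image_mset (\<lambda>e. w (fst e) (snd e)) (mset_set {e. P (fst e) (snd e) = 1})"
    unfolding mset_set_set[OF assms(1)] by (rule image_mset_subseteq_mono)
  then show ?thesis
    by (simp add: sorted_weights_def)
qed

lemma sorted_weights_eq_if_used_edges:
  assumes "distinct es" "set es = {e. P (fst e) (snd e) = 1}"
    and "sorted (rev (map (\<lambda>e. w (fst e) (snd e)) es))"
  shows "sorted_weights w P = map (\<lambda>e. w (fst e) (snd e)) es"
proof -
  have used: "mset_set {e. P (fst e) (snd e) = 1} = mset es"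
    using mset_set_set[OF assms(1)] assms(2) by simp
  have "sort (map (\<lambda>e. w (fst e) (snd e)) es) = rev (map (\<lambda>e. w (fst e) (snd e)) es)"
    using assms(3) by (rule properties_for_sort[rotated]) simp
  then show ?thesis
    unfolding sorted_weights_def used mset_map[symmetric] sorted_list_of_multiset_mset by simp
qed

locale sequential_bottleneck =
  fixes w :: "'a::finite \<Rightarrow> 't::finite \<Rightarrow> real" and I :: "nat \<Rightarrow> 'a" and J :: "nat \<Rightarrow> 't"
    and Pstar :: "'a \<Rightarrow> 't \<Rightarrow> nat"
  assumes w_nonneg: "\<And>i j. w i j \<ge> 0"
    and seq: "bottleneck_seq w I J"
    and opt: "seq_opt w I J Pstar"
    and mu_pos: "\<forall>k\<in>{1..CARD('t)}. mu w I J k > 0"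
begin

lemma edge_medges: "k \<in> {1..CARD('t)} \<Longrightarrow> (I k, J k) \<in> medges (Abar I k) (Tbar J k) w"
  using seq unfolding bottleneck_seq_def by blast

lemma edge_in_stage: "k \<in> {1..CARD('t)} \<Longrightarrow> (I k, J k) \<in> Abar I k \<times> Tbar J k"
  using edge_medges medges_subset by blast

lemma earlier_edge_distinct:
  assumes "1 \<le> j" "j < k" "k \<le> CARD('t)"
  shows "I j \<noteq> I k" "J j \<noteq> J k"
proof -
  have "I k \<notin> I ` {1..<k}" "J k \<notin> J ` {1..<k}"
    using edge_in_stage[of k] assms unfolding Abar_def Tbar_def by auto
  moreover have "j \<in> {1..<k}"
    using assms by simp
  then have "I j \<in> I ` {1..<k}" "J j \<in> J ` {1..<k}"
    by (rule imageI)+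
  ultimately show "I j \<noteq> I k" "J j \<noteq> J k"
    by auto
qed

lemma inj_on_I: "inj_on I {1..CARD('t)}"
  unfolding inj_on_def by (metis earlier_edge_distinct(1) atLeastAtMost_iff linorder_neqE_nat)

lemma inj_on_J: "inj_on J {1..CARD('t)}"
  unfolding inj_on_def by (metis earlier_edge_distinct(2) atLeastAtMost_iff linorder_neqE_nat)

lemma J_onto: "J ` {1..CARD('t)} = UNIV"
proof (rule card_subset_eq)
  show "card (J ` {1..CARD('t)}) = CARD('t)"
    using card_image[OF inj_on_J] by simp
qed auto

lemma distinct_edges:
  assumes "k \<le> Suc CARD('t)"
  shows "distinct (map (\<lambda>j. (I j, J j)) [1..<k])"
proof -
  have "inj_on I {1..<k}"
    using assms by (intro inj_on_subset[OF inj_on_I]) auto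
  then show ?thesis
    by (auto simp: distinct_map inj_on_def)
qed

lemma stage_card_ne_1:
  assumes "k \<in> {1..CARD('t)}" "e \<in> Abar I k \<times> Tbar J k" "e \<noteq> (I k, J k)"
  shows "card (Abar I k \<times> Tbar J k) \<noteq> 1"
  using assms(2,3) edge_in_stage[OF assms(1)] by (metis card_1_singletonE singletonD)

lemma feas_stage_without_edge:
  assumes P: "P \<in> feas UNIV UNIV UNIV" and k: "k \<in> {1..CARD('t)}"
    and used: "\<forall>j\<in>{1..<k}. P (I j) (J j) = 1" and unused: "P (I k) (J k) = 0"
  shows "P \<in> feas (Abar I k) (Tbar J k) (Abar I k \<times> Tbar J k - {(I k, J k)})"
proof (rule feas_restrict[OF P])
  fix i j assume j: "j \<in> Tbar J k" and Pij: "P i j = 1"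
  have "i \<in> Abar I k"
  proof (rule ccontr)
    assume "i \<notin> Abar I k"
    then obtain j' where "j' \<in> {1..<k}" "i = I j'" unfolding Abar_def by auto
    then show False
      using feas_UNIV_row_unique[OF P Pij, of "J j'"] used j unfolding Tbar_def by auto
  qed
  then show "(i, j) \<in> Abar I k \<times> Tbar J k - {(I k, J k)}"
    using j Pij unused by auto
qed

lemma heavier_edge_if_edge_unused:
  assumes P: "P \<in> feas UNIV UNIV UNIV" and k: "k \<in> {1..CARD('t)}"
    and used: "\<forall>j\<in>{1..<k}. P (I j) (J j) = 1" and unused: "P (I k) (J k) = 0"
  shows "\<exists>e\<in>Abar I k \<times> Tbar J k - {(I k, J k)}.
           P (fst e) (snd e) = 1 \<and> w (I k) (J k) < w (fst e) (snd e)"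
proof -
  let ?A = "Abar I k" and ?T = "Tbar J k" and ?e = "(I k, J k)"
  have P_stage: "P \<in> feas ?A ?T (?A \<times> ?T - {?e})"
    using feas_stage_without_edge[OF assms] .
  have "card (?A \<times> ?T) \<noteq> 1"
  proof
    assume "card (?A \<times> ?T) = 1"
    then have "?A \<times> ?T = {?e}"
      using edge_in_stage[OF k] by (metis card_1_singletonE singletonD)
    then have "P \<in> feas ?A ?T {}"
      using P_stage by simp
    moreover have "?T \<noteq> {}"
      using edge_in_stage[OF k] by auto
    ultimately show False
      using feas_no_edges by blast
  qed
  moreover have "0 < rmargin ?A ?T w"
    using mu_pos k unfolding mu_def by blast
  ultimately have "ereal (w (I k) (J k)) < Bmin ?A ?T (?A \<times> ?T - {?e}) w"
    using Bmin_remove_medge_gt edge_medges[OF k] by fastforce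
  also have "\<dots> \<le> bval P (?A \<times> ?T - {?e}) w"
    using P_stage by (rule Bmin_le_bval)
  finally show ?thesis
    using heavier_used_edge_if_less_bval[OF P_stage w_nonneg] by simp
qed

lemma Pstar_Bset: "k \<in> {1..CARD('t)} \<Longrightarrow> Pstar \<in> Bset (Abar I k) (Tbar J k) (Abar I k \<times> Tbar J k) w"
  using opt unfolding seq_opt_def by blast

lemma Pstar_feas: "Pstar \<in> feas UNIV UNIV UNIV"
  using Pstar_Bset[of 1] unfolding Bset_def Abar_def Tbar_def by simp

lemma Pstar_used_edge_le:
  assumes k: "k \<in> {1..CARD('t)}" and e: "e \<in> Abar I k \<times> Tbar J k" "e \<noteq> (I k, J k)"
    and used: "Pstar (fst e) (snd e) = 1"
  shows "w (fst e) (snd e) \<le> w (I k) (J k)"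
proof -
  have "ereal (w (fst e) (snd e)) \<le> bval Pstar (Abar I k \<times> Tbar J k) w"
    using e(1) used by (rule weight_le_bval)
  also have "\<dots> = ereal (w (I k) (J k))"
    using Pstar_Bset[OF k] medges_weight[OF edge_medges[OF k] stage_card_ne_1[OF assms(1-3)]]
    unfolding Bset_def by simp
  finally show ?thesis by simp
qed

lemma Pstar_uses_edges: "k \<in> {1..CARD('t)} \<Longrightarrow> Pstar (I k) (J k) = 1"
proof (induction k rule: less_induct)
  case (less k)
  have used: "\<forall>j\<in>{1..<k}. Pstar (I j) (J j) = 1"
    using less.IH less.prems by simp
  show ?case
  proof (rule ccontr)
    assume "Pstar (I k) (J k) \<noteq> 1"
    then have "Pstar (I k) (J k) = 0"
      using feas_entry_01[OF Pstar_feas] by blast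
    then obtain e where e: "e \<in> Abar I k \<times> Tbar J k - {(I k, J k)}"
        and used_e: "Pstar (fst e) (snd e) = 1" and heavier: "w (I k) (J k) < w (fst e) (snd e)"
      using heavier_edge_if_edge_unused[OF Pstar_feas less.prems used] by blast
    have "w (fst e) (snd e) \<le> w (I k) (J k)"
      using e used_e by (intro Pstar_used_edge_le[OF less.prems]) auto
    then show False
      using heavier by simp
  qed
qed

lemma edge_weight_Suc_le:
  assumes k: "k \<in> {1..<CARD('t)}"
  shows "w (I (Suc k)) (J (Suc k)) \<le> w (I k) (J k)"
proof -
  let ?e = "(I (Suc k), J (Suc k))"
  have "?e \<in> Abar I k \<times> Tbar J k"
    using edge_in_stage[of "Suc k"] k unfolding Abar_def Tbar_def by auto
  moreover have "?e \<noteq> (I k, J k)"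
    using earlier_edge_distinct[of k "Suc k"] k by auto
  moreover have "Pstar (I (Suc k)) (J (Suc k)) = 1"
    using Pstar_uses_edges k by simp
  ultimately show ?thesis
    using Pstar_used_edge_le[of k ?e] k by simp
qed

lemma edge_weight_antimono:
  assumes "1 \<le> i" "i \<le> j" "j \<le> CARD('t)"
  shows "w (I j) (J j) \<le> w (I i) (J i)"
  using assms(2,3)
proof (induction j rule: dec_induct)
  case (step j)
  then show ?case using edge_weight_Suc_le[of j] assms(1) by force
qed simp

lemma eq_Pstar_if_uses_edges:
  assumes P: "P \<in> feas UNIV UNIV UNIV" and uses: "\<forall>k\<in>{1..CARD('t)}. P (I k) (J k) = 1"
  shows "P = Pstar"
proof (intro ext)
  fix i j
  obtain k where k: "k \<in> {1..CARD('t)}" "J k = j" using J_onto by (metis UNIV_I imageE)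
  show "P i j = Pstar i j"
  proof (cases "i = I k")
    case False
    then show ?thesis
      using feas_UNIV_col_unique[OF P, of i j "I k"] feas_UNIV_col_unique[OF Pstar_feas, of i j "I k"]
        feas_entry_01[OF P, of i j] feas_entry_01[OF Pstar_feas, of i j] uses Pstar_uses_edges k
      by force
  qed (use uses Pstar_uses_edges k in auto)
qed

lemma first_unused_edge:
  assumes P: "P \<in> feas UNIV UNIV UNIV" and ne: "P \<noteq> Pstar"
  obtains k where "k \<in> {1..CARD('t)}" "\<forall>j\<in>{1..<k}. P (I j) (J j) = 1" "P (I k) (J k) = 0"
proof -
  have "\<exists>k. k \<in> {1..CARD('t)} \<and> P (I k) (J k) \<noteq> 1"
    using eq_Pstar_if_uses_edges[OF P] ne by blast
  then obtain k where k: "k \<in> {1..CARD('t)}" "P (I k) (J k) \<noteq> 1"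
    and least: "\<And>j. j < k \<Longrightarrow> \<not> (j \<in> {1..CARD('t)} \<and> P (I j) (J j) \<noteq> 1)"
    unfolding exists_least_iff[of "\<lambda>k. k \<in> {1..CARD('t)} \<and> P (I k) (J k) \<noteq> 1"] by blast
  have "\<forall>j\<in>{1..<k}. P (I j) (J j) = 1"
    using least k(1) by fastforce
  moreover have "P (I k) (J k) = 0"
    using k(2) feas_entry_01[OF P, of "I k" "J k"] by simp
  ultimately show ?thesis
    using that k(1) by blast
qed

lemma sorted_weights_lex_greater:
  assumes P: "P \<in> feas UNIV UNIV UNIV" and ne: "P \<noteq> Pstar"
  shows "\<exists>l\<in>{1..CARD('t)}. (\<forall>j\<in>{1..<l}. w (I j) (J j) = sorted_weights w P ! (j - 1))
            \<and> w (I l) (J l) < sorted_weights w P ! (l - 1)"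
proof -
  obtain k where k: "k \<in> {1..CARD('t)}" and used: "\<forall>j\<in>{1..<k}. P (I j) (J j) = 1"
    and unused: "P (I k) (J k) = 0"
    using first_unused_edge[OF P ne] .
  obtain f where f: "f \<in> Abar I k \<times> Tbar J k - {(I k, J k)}" "P (fst f) (snd f) = 1"
      "w (I k) (J k) < w (fst f) (snd f)"
    using heavier_edge_if_edge_unused[OF P k used unused] by blast
  let ?es = "map (\<lambda>j. (I j, J j)) [1..<k] @ [f]"
  have "f \<notin> set (map (\<lambda>j. (I j, J j)) [1..<k])"
    using f(1) unfolding Abar_def by auto
  then have "distinct ?es"
    using distinct_edges[of k] k by simp
  moreover have "\<forall>e\<in>set ?es. P (fst e) (snd e) = 1"
    using used f(2) by auto
  ultimately have sub: "mset (map (\<lambda>j. w (I j) (J j)) [1..<k] @ [w (fst f) (snd f)])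
      \<subseteq># mset (sorted_weights w P)"
    using mset_used_weights_subset_sorted_weights[of ?es P w] by (simp add: o_def)
  have "\<exists>l\<in>{1..k}. (\<forall>j\<in>{1..<l}. w (I j) (J j) = sorted_weights w P ! (j - 1))
      \<and> w (I l) (J l) < sorted_weights w P ! (l - 1)"
    by (rule lex_less_if_submultiset[where a = "\<lambda>j. w (I j) (J j)",
          OF sorted_rev_sorted_weights _ _ sub f(3)])
      (use k edge_weight_antimono in auto)
  then obtain l where "l \<in> {1..k}"
      "\<forall>j\<in>{1..<l}. w (I j) (J j) = sorted_weights w P ! (j - 1)"
      "w (I l) (J l) < sorted_weights w P ! (l - 1)"
    by blast
  then show ?thesis
    using k by (intro bexI[of _ l]) auto
qed

lemma used_edges_Pstar: "{e. Pstar (fst e) (snd e) = 1} = (\<lambda>j. (I j, J j)) ` {1..CARD('t)}"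
proof (intro equalityI subsetI)
  fix e assume e: "e \<in> {e. Pstar (fst e) (snd e) = 1}"
  obtain k where k: "k \<in> {1..CARD('t)}" "J k = snd e"
    using J_onto by (metis UNIV_I imageE)
  then have "fst e = I k"
    using feas_UNIV_col_unique[OF Pstar_feas, of "fst e" "snd e" "I k"] e Pstar_uses_edges[OF k(1)]
    by simp
  then have "e = (I k, J k)"
    using k(2) by (simp add: prod_eq_iff)
  then show "e \<in> (\<lambda>j. (I j, J j)) ` {1..CARD('t)}"
    using k(1) by blast
qed (use Pstar_uses_edges in auto)

lemma sorted_weights_Pstar: "sorted_weights w Pstar = map (\<lambda>j. w (I j) (J j)) [1..<Suc CARD('t)]"
proof -
  let ?es = "map (\<lambda>j. (I j, J j)) [1..<Suc CARD('t)]"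
  have "set ?es = {e. Pstar (fst e) (snd e) = 1}"
    using used_edges_Pstar by (simp add: atLeastLessThanSuc_atLeastAtMost del: upt_Suc)
  moreover have "sorted (rev (map (\<lambda>j. w (I j) (J j)) [1..<Suc CARD('t)]))"
    unfolding sorted_rev_iff_nth_mono
    by (auto intro!: edge_weight_antimono simp: nth_upt simp del: upt_Suc)
  ultimately show ?thesis
    using sorted_weights_eq_if_used_edges[OF distinct_edges, of "Suc CARD('t)" Pstar w]
    by (simp add: o_def del: upt_Suc)
qed

lemma sorted_weights_Pstar_nth: "j \<in> {1..CARD('t)} \<Longrightarrow> sorted_weights w Pstar ! (j - 1) = w (I j) (J j)"
  by (auto simp: sorted_weights_Pstar nth_upt simp del: upt_Suc)

lemma independent_of_choices:
  assumes "sequential_bottleneck w I' J' P'"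
  shows "P' = Pstar \<and> (\<forall>k\<in>{1..CARD('t)}. w (I' k) (J' k) = w (I k) (J k))"
proof -
  interpret other: sequential_bottleneck w I' J' P' by fact
  have "P' = Pstar"
  proof (rule ccontr)
    assume ne: "P' \<noteq> Pstar"
    obtain l where "l \<in> {1..CARD('t)}" "\<forall>j\<in>{1..<l}. w (I j) (J j) = w (I' j) (J' j)"
        "w (I l) (J l) < w (I' l) (J' l)"
      using sorted_weights_lex_greater[OF other.Pstar_feas ne] other.sorted_weights_Pstar_nth by auto
    moreover obtain l' where "l' \<in> {1..CARD('t)}" "\<forall>j\<in>{1..<l'}. w (I' j) (J' j) = w (I j) (J j)"
        "w (I' l') (J' l') < w (I l') (J l')"
      using other.sorted_weights_lex_greater[OF Pstar_feas] ne sorted_weights_Pstar_nth by fastforce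
    ultimately show False
      by (cases l l' rule: linorder_cases) force+
  qed
  then show ?thesis
    using sorted_weights_Pstar_nth other.sorted_weights_Pstar_nth by metis
qed

end

theorem mainTheorem4:
  fixes w :: "'a::finite \<Rightarrow> 't::finite \<Rightarrow> real"
    and I :: "nat \<Rightarrow> 'a" and J :: "nat \<Rightarrow> 't"
    and Pistar :: "'a \<Rightarrow> 't \<Rightarrow> nat"
  assumes m_gt1: "card (UNIV :: 'a set) > 1"
    and n_le_m: "card (UNIV :: 't set) \<le> card (UNIV :: 'a set)"
    and w_nonneg: "\<And>i j. w i j \<ge> 0"
    and seq: "bottleneck_seq w I J"
    and opt: "seq_opt w I J Pistar"
    and mu_pos: "\<forall>k\<in>{1..card (UNIV :: 't set)}. mu w I J k > 0"
  shows "Pistar \<in> feas UNIV UNIV UNIV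
    \<and> (\<forall>k\<in>{1..<card (UNIV :: 't set)}. w (I k) (J k) \<ge> w (I (Suc k)) (J (Suc k)))
    \<and> (\<forall>Pi'\<in>feas UNIV UNIV UNIV. Pi' \<noteq> Pistar \<longrightarrow>
         (let ws = sorted_weights w Pi' in
            w (I 1) (J 1) < ws ! 0
          \<or> (\<exists>l\<in>{2..card (UNIV :: 't set)}. (\<forall>k\<in>{1..<l}. w (I k) (J k) = ws ! (k - 1))
                                 \<and> w (I l) (J l) < ws ! (l - 1))))
    \<and> (\<forall>I' J' Pi''. bottleneck_seq w I' J' \<and> seq_opt w I' J' Pi''
          \<and> (\<forall>k\<in>{1..card (UNIV :: 't set)}. mu w I' J' k > 0) \<longrightarrow>
          Pi'' = Pistar \<and> (\<forall>k\<in>{1..card (UNIV :: 't set)}. w (I' k) (J' k) = w (I k) (J k)))"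
proof -
  interpret sequential_bottleneck w I J Pistar
    using w_nonneg seq opt mu_pos by unfold_locales
  have lex: "let ws = sorted_weights w Pi' in
            w (I 1) (J 1) < ws ! 0
          \<or> (\<exists>l\<in>{2..card (UNIV :: 't set)}. (\<forall>k\<in>{1..<l}. w (I k) (J k) = ws ! (k - 1))
                                 \<and> w (I l) (J l) < ws ! (l - 1))"
    if P': "Pi' \<in> feas UNIV UNIV UNIV" "Pi' \<noteq> Pistar" for Pi'
  proof -
    obtain l where "l \<in> {1..card (UNIV :: 't set)}"
        "\<forall>k\<in>{1..<l}. w (I k) (J k) = sorted_weights w Pi' ! (k - 1)"
        "w (I l) (J l) < sorted_weights w Pi' ! (l - 1)"
      using sorted_weights_lex_greater[OF P'] by blast
    then show ?thesis
      unfolding Let_def by (cases "l = 1") (auto intro!: bexI[of _ l])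
  qed
  show ?thesis
    using Pstar_feas edge_weight_Suc_le lex independent_of_choices w_nonneg
    unfolding sequential_bottleneck_def by blast
qed

end
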